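(* Consider the nonlinear event-triggered setting described in the context, with a smooth class $\mathcal K_\infty$ function $\beta$, $\sigma\in(0,1)$ and $\theta\ge 0$, and execution times generated by the dynamic event generator. Then for all $t\in[0,t_\infty)$, $$\eta(t)+\theta\big(\sigma\alpha(\|x(t)\|)-\gamma(\|e(t)\|)\big)\ge 0\quad\text{and}\quad \eta(t)\ge 0.$$
   Context: Let $f:\mathbb{R}^n\times\mathbb{R}^m\to\mathbb{R}^n$ and a feedback $k:\mathbb{R}^n\to\mathbb{R}^m$ be given. A class $\mathcal K_\infty$ function is a continuous, strictly increasing $\alpha:[0,\infty)\to[0,\infty)$ with $\alpha(0)=0$ and $\alpha(r)\to\infty$ as $r\to\infty$. Assume there is a smooth $V:\mathbb{R}^n\to[0,\infty)$ and class $\mathcal K_\infty$ functions $\underline\alpha,\overline\alpha,\alpha,\gamma$ such that for all $x,e\in\mathbb{R}^n$: $\underline\alpha(\|x\|)\le V(x)\le\overline\alpha(\|x\|)$ and $\nabla V(x)\cdot f(x,k(x+e))\le-\alpha(\|x\|)+\gamma(\|e\|)$ (ISS-Lyapunov function for $\dot x=f(x,k(x+e))$). The plant is $\dot x=f(x,u)$ with sample-and-hold input $u(t)=k(x(t_i))$ for $t\in[t_i,t_{i+1})$, where $(t_i)_{i\in\mathbb I}$ is an increasing sequence of execution times; $e(t)=x(t_i)-x(t)$ for $t\in[t_i,t_{i+1})$, so $\dot x=f(x,k(x+e))$. If there are infinitely many executions, $\mathbb I=\mathbb N$ and $t_\infty=\lim t_i$; if finitely many ($\mathbb I=\{0,\dots,I\}$),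 $t_\infty=t_{I+1}=+\infty$. For a function $g$, $g(t^-)$ denotes the left limit at $t$. Dynamic event generator: with design parameters a smooth class $\mathcal K_\infty$ function $\beta$, $\sigma\in(0,1)$ and $\theta\ge0$, an internal variable $\eta$ satisfies $\dot\eta=-\beta(\eta)+\sigma\alpha(\|x\|)-\gamma(\|e\|)$, $\eta(0)=0$, and execution times are $t_0=0$, $t_{i+1}=\inf\{t>t_i:\ \eta(t)+\theta(\sigma\alpha(\|x(t)\|)-\gamma(\|e(t^-)\|))\le 0\}$. It is assumed that $x(t_i)\neq 0$ for all $i\in\mathbb I$. *)

theory Defs
  imports "HOL-Analysis.Analysis" "HOL-Library.Extended_Real"
begin

text \<open>Class K-infinity functions on [0,oo) (represented as real functions; values on
  negative reals are irrelevant).\<close>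
definition Kinf :: "(real \<Rightarrow> real) \<Rightarrow> bool" where
  "Kinf g \<longleftrightarrow> continuous_on {0..} g \<and> strict_mono_on {0..} g \<and> g 0 = 0
      \<and> (\<forall>r\<ge>0. g r \<ge> 0) \<and> filterlim g at_top at_top"

definition dirderiv :: "'a::real_normed_vector \<Rightarrow> ('a \<Rightarrow> real) \<Rightarrow> 'a \<Rightarrow> real" where
  "dirderiv v g x = deriv (\<lambda>h. g (x + h *\<^sub>R v)) 0"

definition smooth_fn :: "('a::euclidean_space \<Rightarrow> real) \<Rightarrow> bool" where
  "smooth_fn g \<longleftrightarrow> (\<forall>vs. set vs \<subseteq> Basis \<longrightarrow>
      continuous_on UNIV (foldr dirderiv vs g) \<and>
      (\<forall>v\<in>Basis. \<forall>x. (\<lambda>h. foldr dirderiv vs g (x + h *\<^sub>R v)) differentiable (at 0)))"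

definition grad :: "(real^'n \<Rightarrow> real) \<Rightarrow> real^'n \<Rightarrow> real^'n" where
  "grad g x = (\<chi> j. dirderiv (axis j 1) g x)"

definition exec_index :: "nat set \<Rightarrow> bool" where
  "exec_index I \<longleftrightarrow> I = UNIV \<or> (\<exists>N. I = {0..N})"

definition tnext :: "nat set \<Rightarrow> (nat \<Rightarrow> real) \<Rightarrow> nat \<Rightarrow> ereal" where
  "tnext I t i = (if Suc i \<in> I then ereal (t (Suc i)) else \<infinity>)"

definition tinf :: "nat set \<Rightarrow> (nat \<Rightarrow> real) \<Rightarrow> ereal" where
  "tinf I t = (if I = UNIV then lim (\<lambda>i. ereal (t i)) else \<infinity>)"

definition ival :: "nat set \<Rightarrow> (nat \<Rightarrow> real) \<Rightarrow> nat \<Rightarrow> real set" where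
  "ival I t i = {s. t i \<le> s \<and> ereal s < tnext I t i}"

end

theory Submission
  imports Defs
begin

text \<open>Between two executions the trigger condition has not fired yet, so the triggering
  quantity \<open>\<eta> + \<theta> (\<sigma> \<alpha>(|x|) - \<gamma>(|e|))\<close> is positive there; at an execution time \<open>e = 0\<close>,
  so it is at least \<open>\<eta>\<close>. It therefore suffices to show \<open>\<eta> \<ge> 0\<close>. Wherever \<open>\<eta> < 0\<close> between
  executions, positivity of the triggering quantity forces \<open>\<sigma> \<alpha>(|x|) - \<gamma>(|e|) \<ge> 0\<close>, hence
  \<open>\<eta>' \<ge> -\<beta>(\<eta>) \<ge> L \<eta>\<close> as long as \<open>\<eta>\<close> stays close to \<open>0\<close>, because \<open>\<beta>\<close> is differentiable
  with \<open>\<beta>(0) = 0\<close>. A Gronwall comparison then shows that \<open>\<eta>\<close>, starting at \<open>0\<close>, never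
  becomes negative.\<close>

lemma deriv_ge_linear_preserves_nonneg:
  fixes \<eta> :: "real \<Rightarrow> real"
  assumes "a \<le> b" and cont: "continuous_on {a..b} \<eta>" and "\<eta> a \<ge> 0" and "finite S"
    and deriv: "\<And>y. y \<in> {a<..<b} - S \<Longrightarrow> \<exists>d. (\<eta> has_real_derivative d) (at y) \<and> L * \<eta> y \<le> d"
  shows "\<eta> b \<ge> 0"
proof -
  obtain D where D: "\<And>y. y \<in> {a<..<b} - S \<Longrightarrow> (\<eta> has_real_derivative D y) (at y) \<and> L * \<eta> y \<le> D y"
    using deriv by metis
  define g where "g y = \<eta> y * exp (- L * y)" for y
  define G where "G y = (if y \<in> {a<..<b} - S then (D y - L * \<eta> y) * exp (- L * y) else 0)" for y
  have "(G has_integral (g b - g a)) {a..b}"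
  proof (rule fundamental_theorem_of_calculus_interior_strong[OF \<open>finite S\<close> \<open>a \<le> b\<close>])
    show "continuous_on {a..b} g"
      unfolding g_def by (intro continuous_intros cont)
    fix y assume y: "y \<in> {a<..<b} - S"
    have "((\<lambda>y. \<eta> y * exp (- L * y)) has_real_derivative
        D y * exp (- L * y) + exp (- L * y) * (- L) * \<eta> y) (at y)"
      using D[OF y] by (auto intro!: derivative_eq_intros)
    then show "(g has_vector_derivative G y) (at y)"
      using y by (simp add: g_def[abs_def] G_def algebra_simps
          flip: has_real_derivative_iff_has_vector_derivative)
  qed
  moreover have "\<forall>y\<in>{a..b}. 0 \<le> G y"
    using D by (auto simp: G_def)
  ultimately have "g a \<le> g b"
    by (metis has_integral_nonneg diff_ge_0_iff_ge)
  moreover have "0 \<le> g a"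
    using \<open>\<eta> a \<ge> 0\<close> by (simp add: g_def)
  ultimately have "0 \<le> \<eta> b * exp (- L * b)"
    by (simp add: g_def)
  then show ?thesis
    by (simp add: zero_le_mult_iff)
qed

lemma last_nonneg_point:
  fixes \<eta> :: "real \<Rightarrow> real"
  assumes "a \<le> b" and cont: "continuous_on {a..b} \<eta>" and "\<eta> a \<ge> 0" and "\<eta> b < 0"
  obtains c where "a \<le> c" "c < b" "\<eta> c \<ge> 0" "\<And>y. c < y \<Longrightarrow> y \<le> b \<Longrightarrow> \<eta> y < 0"
proof -
  define A where "A = {y \<in> {a..b}. 0 \<le> \<eta> y}"
  have "closed A"
    unfolding A_def by (rule continuous_on_closed_Collect_le[OF continuous_on_const cont]) simp
  moreover have "a \<in> A" "bdd_above A"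
    using \<open>a \<le> b\<close> \<open>\<eta> a \<ge> 0\<close> unfolding A_def by (auto intro: bdd_aboveI[of _ b])
  ultimately have "Sup A \<in> A"
    using closed_contains_Sup by blast
  then have c: "a \<le> Sup A" "Sup A \<le> b" "\<eta> (Sup A) \<ge> 0"
    unfolding A_def by auto
  have "\<eta> y < 0" if "Sup A < y" "y \<le> b" for y
    using cSup_upper[OF _ \<open>bdd_above A\<close>, of y] that c unfolding A_def by force
  moreover have "Sup A \<noteq> b"
    using c \<open>\<eta> b < 0\<close> by auto
  ultimately show thesis
    using that c by auto
qed

lemma deriv_ge_linear_near_zero_preserves_nonneg:
  fixes \<eta> :: "real \<Rightarrow> real"
  assumes "a \<le> b" and cont: "continuous_on {a..b} \<eta>" and "\<eta> a \<ge> 0" and "finite S" and "\<delta> > 0"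
    and deriv: "\<And>y. y \<in> {a<..<b} - S \<Longrightarrow> - \<delta> < \<eta> y \<Longrightarrow> \<eta> y < 0 \<Longrightarrow>
        \<exists>d. (\<eta> has_real_derivative d) (at y) \<and> L * \<eta> y \<le> d"
  shows "\<eta> b \<ge> 0"
proof (rule ccontr)
  assume "\<not> \<eta> b \<ge> 0"
  then obtain c where c: "a \<le> c" "c < b" "\<eta> c \<ge> 0"
    and neg: "\<And>y. c < y \<Longrightarrow> y \<le> b \<Longrightarrow> \<eta> y < 0"
    using last_nonneg_point[OF \<open>a \<le> b\<close> cont \<open>\<eta> a \<ge> 0\<close>] by (metis not_le)
  obtain r where "r > 0" and r: "\<And>y. y \<in> {a..b} \<Longrightarrow> dist y c < r \<Longrightarrow> dist (\<eta> y) (\<eta> c) < \<delta>"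
    using cont \<open>\<delta> > 0\<close> c unfolding continuous_on_iff by (metis atLeastAtMost_iff less_imp_le)
  define c' where "c' = min b (c + r / 2)"
  have c': "c < c'" "c' \<le> b"
    using c \<open>r > 0\<close> by (auto simp: c'_def)
  have near: "- \<delta> < \<eta> y" if "c \<le> y" "y \<le> c'" for y
    using r[of y] that c c' \<open>r > 0\<close> by (auto simp: c'_def dist_real_def)
  have "\<eta> c' \<ge> 0"
  proof (rule deriv_ge_linear_preserves_nonneg[of c c' \<eta> S L])
    show "continuous_on {c..c'} \<eta>"
      using c c' by (auto intro: continuous_on_subset[OF cont])
    show "\<exists>d. (\<eta> has_real_derivative d) (at y) \<and> L * \<eta> y \<le> d" if "y \<in> {c<..<c'} - S" for y
      using deriv[of y] near[of y] neg[of y] that c c' by auto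
  qed (use c c' \<open>finite S\<close> in auto)
  with neg[OF c'] show False
    by simp
qed

lemma linear_bound_near_zero:
  fixes \<beta> :: "real \<Rightarrow> real"
  assumes "\<beta> differentiable (at 0)" and "\<beta> 0 = 0"
  obtains \<delta> L where "\<delta> > 0" "\<And>y. \<bar>y\<bar> < \<delta> \<Longrightarrow> \<bar>\<beta> y\<bar> \<le> L * \<bar>y\<bar>"
proof -
  obtain D where "(\<beta> has_real_derivative D) (at 0)"
    using assms(1) real_differentiable_def by blast
  then have "((\<lambda>y. \<beta> y / y) \<longlongrightarrow> D) (at 0)"
    using assms(2) by (simp add: has_field_derivative_iff)
  then have "\<forall>\<^sub>F y in at 0. dist (\<beta> y / y) D < 1"
    by (simp add: tendsto_iff)
  then obtain \<delta> where "\<delta> > 0" and \<delta>: "\<And>y. y \<noteq> 0 \<Longrightarrow> \<bar>y\<bar> < \<delta> \<Longrightarrow> \<bar>\<beta> y / y - D\<bar> < 1"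
    by (auto simp: eventually_at dist_real_def)
  have "\<bar>\<beta> y\<bar> \<le> (\<bar>D\<bar> + 1) * \<bar>y\<bar>" if "\<bar>y\<bar> < \<delta>" for y
  proof (cases "y = 0")
    case False
    then have "\<bar>\<beta> y\<bar> = \<bar>\<beta> y / y\<bar> * \<bar>y\<bar>"
      by simp
    also have "\<dots> \<le> (\<bar>D\<bar> + 1) * \<bar>y\<bar>"
      using \<delta>[OF False that] by (intro mult_right_mono) auto
    finally show ?thesis .
  qed (use assms(2) in simp)
  with \<open>\<delta> > 0\<close> show thesis
    using that by blast
qed

lemma smooth_fn_real_differentiable:
  fixes g :: "real \<Rightarrow> real"
  assumes "smooth_fn g"
  shows "g differentiable (at x)"
proof -
  have "(\<lambda>h. foldr dirderiv [] g (x + h *\<^sub>R 1)) differentiable (at 0)"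
    using assms unfolding smooth_fn_def by (metis Basis_real_def empty_subsetI insertI1 list.set(1))
  then have "((\<lambda>h. g (x + h)) \<circ> (\<lambda>h. h - x)) differentiable (at x)"
    by (intro differentiable_chain_at) simp_all
  then show ?thesis
    by (simp add: o_def)
qed

lemma Lim_at_left_eq_if_eventually_continuous:
  fixes e g :: "real \<Rightarrow> 'a::metric_space"
  assumes eq: "eventually (\<lambda>y. e y = g y) (nhds s)" and "isCont g s"
  shows "Lim (at_left s) e = e s"
proof -
  have "e s = g s"
    using eq by (rule eventually_nhds_x_imp_x)
  have "(g \<longlongrightarrow> g s) (at_left s)"
    using \<open>isCont g s\<close> by (simp add: isCont_def filterlim_at_split)
  moreover have "eventually (\<lambda>y. g y = e y) (at_left s)"
    using eq by (auto simp: eventually_at_filter elim: eventually_mono)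
  ultimately have "(e \<longlongrightarrow> e s) (at_left s)"
    using \<open>e s = g s\<close> by (metis tendsto_cong)
  then show ?thesis
    by (intro tendsto_Lim) auto
qed

lemma interior_ival:
  assumes "t i < s" "s \<in> ival I t i"
  shows "s \<in> interior (ival I t i)"
proof -
  have "open ({t i<..} \<inter> ereal -` {..<tnext I t i})"
    by (intro open_Int open_greaterThan open_vimage continuous_on_ereal continuous_on_id open_lessThan)
  moreover have "{t i<..} \<inter> ereal -` {..<tnext I t i} \<subseteq> ival I t i"
    by (auto simp: ival_def)
  moreover have "s \<in> {t i<..} \<inter> ereal -` {..<tnext I t i}"
    using assms by (simp add: ival_def)
  ultimately show ?thesis
    by (meson interior_maximal subsetD)
qed

locale execution_times =
  fixes I :: "nat set" and t :: "nat \<Rightarrow> real"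
  assumes exec_index: "exec_index I"
    and t0: "t 0 = 0"
    and t_incr: "\<forall>i. Suc i \<in> I \<longrightarrow> t i < t (Suc i)"
begin

abbreviation horizon :: "real set" where
  "horizon \<equiv> {s. 0 \<le> s \<and> ereal s < tinf I t}"

lemma index_downward_closed: "j \<in> I \<Longrightarrow> i \<le> j \<Longrightarrow> i \<in> I"
  using exec_index by (auto simp: exec_index_def)

lemma zero_in_index: "0 \<in> I"
  using exec_index by (auto simp: exec_index_def)

lemma t_mono:
  assumes "j \<in> I" "i \<le> j"
  shows "t i \<le> t j"
  using assms(2,1)
proof (induction j rule: dec_induct)
  case (step n)
  then have "n \<in> I"
    using index_downward_closed[of "Suc n" n] by simp
  with step have "t i \<le> t n" "t n < t (Suc n)"
    using t_incr by auto
  then show ?case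
    by simp
qed simp

lemma t_nonneg: "i \<in> I \<Longrightarrow> 0 \<le> t i"
  using t_mono[of i 0] t0 by simp

lemma tinf_eq_SUP:
  assumes "I = UNIV"
  shows "tinf I t = (SUP i. ereal (t i))"
proof -
  have "incseq (\<lambda>i. ereal (t i))"
    using t_mono assms by (simp add: incseq_def)
  then have "(\<lambda>i. ereal (t i)) \<longlonglongrightarrow> (SUP i. ereal (t i))"
    by (rule LIMSEQ_SUP)
  then show ?thesis
    using assms by (simp add: tinf_def limI)
qed

lemma tnext_le_tinf: "tnext I t i \<le> tinf I t"
proof (cases "I = UNIV")
  case True
  have "ereal (t (Suc i)) \<le> (SUP j. ereal (t j))"
    using SUP_upper[of "Suc i" UNIV "\<lambda>j. ereal (t j)"] by simp
  then show ?thesis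
    unfolding tnext_def tinf_eq_SUP[OF True] using True by simp
qed (simp add: tinf_def)

lemma t_in_ival: "i \<in> I \<Longrightarrow> t i \<in> ival I t i"
  using t_incr by (simp add: ival_def tnext_def)

lemma ival_subset_horizon:
  assumes "i \<in> I"
  shows "ival I t i \<subseteq> horizon"
proof
  fix s assume "s \<in> ival I t i"
  then have "t i \<le> s" "ereal s < tnext I t i"
    by (simp_all add: ival_def)
  then show "s \<in> horizon"
    using t_nonneg[OF assms] tnext_le_tinf[of i] by auto
qed

lemma finite_executions_before:
  assumes "ereal b < tinf I t"
  shows "finite {i \<in> I. t i \<le> b}"
proof (cases "I = UNIV")
  case True
  then obtain j where "ereal b < ereal (t j)"
    using assms tinf_eq_SUP[OF True] by (auto simp: less_SUP_iff)
  have "i < j" if "t i \<le> b" for i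
  proof (rule ccontr)
    assume "\<not> i < j"
    then have "t j \<le> t i"
      using t_mono True by simp
    with that \<open>ereal b < ereal (t j)\<close> show False
      by simp
  qed
  then have "{i \<in> I. t i \<le> b} \<subseteq> {..<j}"
    by auto
  then show ?thesis
    by (rule finite_subset) simp
next
  case False
  then show ?thesis
    using exec_index by (auto simp: exec_index_def)
qed

lemma horizon_covered:
  assumes "s \<in> horizon"
  obtains i where "i \<in> I" "s \<in> ival I t i"
proof -
  define J where "J = {i \<in> I. t i \<le> s}"
  have "finite J" "0 \<in> J"
    using finite_executions_before assms zero_in_index t0
    by (auto simp: J_def)
  then have "Max J \<in> J"
    by (intro Max_in) auto
  have "Suc (Max J) \<notin> J"
    using Max_ge[OF \<open>finite J\<close>, of "Suc (Max J)"] by auto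
  with \<open>Max J \<in> J\<close> have "Max J \<in> I" "s \<in> ival I t (Max J)"
    by (auto simp: J_def ival_def tnext_def not_le)
  with that show thesis
    by blast
qed

lemma trigger_positive:
  fixes g :: "real \<Rightarrow> real"
  assumes "tnext I t i = Inf (ereal ` {s. t i < s \<and> ereal s < tinf I t \<and> g s \<le> 0})"
    and "i \<in> I" "t i < s" "s \<in> ival I t i"
  shows "0 < g s"
proof (rule ccontr)
  assume "\<not> 0 < g s"
  moreover have "ereal s < tinf I t"
    using assms(4) tnext_le_tinf[of i] by (auto simp: ival_def)
  ultimately have "tnext I t i \<le> ereal s"
    unfolding assms(1) using \<open>t i < s\<close> by (intro Inf_lower imageI) auto
  then show False
    using assms(4) by (auto simp: ival_def dest: leD)
qed

lemma sampling_error_left_limit: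
  fixes x e :: "real \<Rightarrow> 'a::real_normed_vector"
  assumes "continuous_on horizon x" and e: "\<forall>i\<in>I. \<forall>s\<in>ival I t i. e s = x (t i) - x s"
    and "i \<in> I" "t i < s" "s \<in> ival I t i"
  shows "Lim (at_left s) e = e s"
proof (rule Lim_at_left_eq_if_eventually_continuous)
  have "s \<in> interior horizon"
    using interior_ival[OF assms(4,5)] interior_mono[OF ival_subset_horizon[OF \<open>i \<in> I\<close>]] by blast
  then show "isCont (\<lambda>y. x (t i) - x y) s"
    using continuous_on_interior[OF assms(1)] by (intro continuous_intros)
  show "eventually (\<lambda>y. e y = x (t i) - x y) (nhds s)"
    using eventually_nhds_in_nhd[OF interior_ival[OF assms(4,5)]] e \<open>i \<in> I\<close>
    by (auto elim: eventually_mono)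
qed

lemma internal_variable_nonneg:
  fixes \<eta> \<beta> w :: "real \<Rightarrow> real"
  assumes cont: "continuous_on horizon \<eta>" and "\<eta> 0 = 0"
    and "\<beta> differentiable (at 0)" "\<beta> 0 = 0" and "\<theta> \<ge> 0"
    and deriv: "\<And>i s. i \<in> I \<Longrightarrow> t i < s \<Longrightarrow> s \<in> ival I t i \<Longrightarrow>
        (\<eta> has_real_derivative (- \<beta> (\<eta> s) + w s)) (at s)"
    and pos: "\<And>i s. i \<in> I \<Longrightarrow> t i < s \<Longrightarrow> s \<in> ival I t i \<Longrightarrow> 0 < \<eta> s + \<theta> * w s"
    and "s \<in> horizon"
  shows "\<eta> s \<ge> 0"
proof -
  obtain \<delta> L where "\<delta> > 0" and \<beta>_bound: "\<And>y. \<bar>y\<bar> < \<delta> \<Longrightarrow> \<bar>\<beta> y\<bar> \<le> L * \<bar>y\<bar>"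
    using linear_bound_near_zero[OF \<open>\<beta> differentiable (at 0)\<close> \<open>\<beta> 0 = 0\<close>] by blast
  have sub: "{0..s} \<subseteq> horizon"
    using \<open>s \<in> horizon\<close> by (auto intro: le_less_trans[of "ereal _" "ereal s"])
  show ?thesis
  proof (rule deriv_ge_linear_near_zero_preserves_nonneg[of 0 s \<eta> "t ` {i \<in> I. t i \<le> s}" \<delta> L])
    show "continuous_on {0..s} \<eta>"
      using sub by (rule continuous_on_subset[OF cont])
    show "finite (t ` {i \<in> I. t i \<le> s})"
      using \<open>s \<in> horizon\<close> finite_executions_before by simp
    fix y assume y: "y \<in> {0<..<s} - t ` {i \<in> I. t i \<le> s}" and "- \<delta> < \<eta> y" "\<eta> y < 0"
    have "y \<in> horizon"
      using y subsetD[OF sub, of y] by simp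
    then obtain i where i: "i \<in> I" "y \<in> ival I t i"
      by (rule horizon_covered)
    have "t i \<le> y"
      using i(2) by (simp add: ival_def)
    moreover have "t i \<noteq> y"
      using y i(1) \<open>t i \<le> y\<close> by auto
    ultimately have "t i < y"
      by simp
    have "0 \<le> w y"
    proof (rule ccontr)
      assume "\<not> 0 \<le> w y"
      then have "\<theta> * w y \<le> 0"
        using \<open>\<theta> \<ge> 0\<close> by (simp add: mult_nonneg_nonpos)
      with pos[OF i(1) \<open>t i < y\<close> i(2)] \<open>\<eta> y < 0\<close> show False
        by linarith
    qed
    moreover have "L * \<eta> y \<le> - \<beta> (\<eta> y)"
    proof -
      have "\<bar>\<eta> y\<bar> < \<delta>"
        using \<open>- \<delta> < \<eta> y\<close> \<open>\<eta> y < 0\<close> by simp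
      then have "\<bar>\<beta> (\<eta> y)\<bar> \<le> L * \<bar>\<eta> y\<bar>"
        by (rule \<beta>_bound)
      moreover have "L * \<bar>\<eta> y\<bar> = - (L * \<eta> y)"
        using \<open>\<eta> y < 0\<close> by simp
      ultimately show ?thesis
        using abs_ge_minus_self[of "\<beta> (\<eta> y)"] by linarith
    qed
    ultimately show "\<exists>d. (\<eta> has_real_derivative d) (at y) \<and> L * \<eta> y \<le> d"
      using deriv[OF i(1) \<open>t i < y\<close> i(2)] by force
  qed (use \<open>s \<in> horizon\<close> \<open>\<eta> 0 = 0\<close> \<open>\<delta> > 0\<close> in auto)
qed

lemma triggering_quantity_nonneg:
  fixes \<eta> \<beta> w :: "real \<Rightarrow> real"
  assumes cont: "continuous_on horizon \<eta>" and "\<eta> 0 = 0"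
    and "\<beta> differentiable (at 0)" "\<beta> 0 = 0" and "\<theta> \<ge> 0"
    and deriv: "\<And>i s. i \<in> I \<Longrightarrow> t i < s \<Longrightarrow> s \<in> ival I t i \<Longrightarrow>
        (\<eta> has_real_derivative (- \<beta> (\<eta> s) + w s)) (at s)"
    and pos: "\<And>i s. i \<in> I \<Longrightarrow> t i < s \<Longrightarrow> s \<in> ival I t i \<Longrightarrow> 0 < \<eta> s + \<theta> * w s"
    and at_executions: "\<And>i. i \<in> I \<Longrightarrow> 0 \<le> w (t i)"
    and "s \<in> horizon"
  shows "0 \<le> \<eta> s + \<theta> * w s \<and> 0 \<le> \<eta> s"
proof -
  have "0 \<le> \<eta> s"
    using internal_variable_nonneg[OF assms(1-7,9)] .
  moreover obtain i where i: "i \<in> I" "s \<in> ival I t i"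
    using horizon_covered[OF \<open>s \<in> horizon\<close>] by blast
  moreover have "t i < s" if "t i \<noteq> s"
    using i(2) that by (simp add: ival_def)
  ultimately show ?thesis
    using pos[OF i(1) _ i(2)] at_executions[OF i(1)] \<open>\<theta> \<ge> 0\<close> by force
qed

end

theorem lemma1:
  fixes f :: "real^'n \<Rightarrow> real^'m \<Rightarrow> real^'n"
    and k :: "real^'n \<Rightarrow> real^'m"
    and V :: "real^'n \<Rightarrow> real"
    and \<alpha>l \<alpha>u \<alpha> \<gamma> \<beta> :: "real \<Rightarrow> real"
    and \<sigma> \<theta> :: real
    and I :: "nat set" and t :: "nat \<Rightarrow> real"
    and x e :: "real \<Rightarrow> real^'n" and \<eta> :: "real \<Rightarrow> real"
  assumes V_smooth: "smooth_fn V"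
    and V_nonneg: "\<forall>z. V z \<ge> 0"
    and K: "Kinf \<alpha>l" "Kinf \<alpha>u" "Kinf \<alpha>" "Kinf \<gamma>"
    and V_bounds: "\<forall>z. \<alpha>l (norm z) \<le> V z \<and> V z \<le> \<alpha>u (norm z)"
    and ISS: "\<forall>z w. grad V z \<bullet> f z (k (z + w)) \<le> - \<alpha> (norm z) + \<gamma> (norm w)"
    and \<beta>: "smooth_fn \<beta>" "Kinf \<beta>"
    and \<sigma>: "0 < \<sigma>" "\<sigma> < 1"
    and \<theta>: "0 \<le> \<theta>"
    and I: "exec_index I"
    and t0: "t 0 = 0"
    and t_incr: "\<forall>i. Suc i \<in> I \<longrightarrow> t i < t (Suc i)"
    and x_cont: "continuous_on {s. 0 \<le> s \<and> ereal s < tinf I t} x"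
    and x_ode: "\<forall>i\<in>I. \<forall>s\<in>ival I t i.
        (x has_vector_derivative f (x s) (k (x (t i)))) (at s within ival I t i)"
    and e_def: "\<forall>i\<in>I. \<forall>s\<in>ival I t i. e s = x (t i) - x s"
    and \<eta>_cont: "continuous_on {s. 0 \<le> s \<and> ereal s < tinf I t} \<eta>"
    and \<eta>0: "\<eta> 0 = 0"
    and \<eta>_ode: "\<forall>i\<in>I. \<forall>s\<in>ival I t i.
        (\<eta> has_real_derivative (- \<beta> (\<eta> s) + \<sigma> * \<alpha> (norm (x s)) - \<gamma> (norm (e s))))
          (at s within ival I t i)"
    and trigger: "\<forall>i\<in>I. tnext I t i = Inf (ereal ` {s. t i < s \<and> ereal s < tinf I t \<and>
        \<eta> s + \<theta> * (\<sigma> * \<alpha> (norm (x s)) - \<gamma> (norm (Lim (at_left s) e))) \<le> 0})"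
    and x_nz: "\<forall>i\<in>I. x (t i) \<noteq> 0"
  shows "\<forall>s. 0 \<le> s \<and> ereal s < tinf I t \<longrightarrow>
      \<eta> s + \<theta> * (\<sigma> * \<alpha> (norm (x s)) - \<gamma> (norm (e s))) \<ge> 0 \<and> \<eta> s \<ge> 0"
proof -
  interpret execution_times I t
    using I t0 t_incr by unfold_locales
  define w where "w s = \<sigma> * \<alpha> (norm (x s)) - \<gamma> (norm (e s))" for s
  have pos: "0 < \<eta> s + \<theta> * w s" if "i \<in> I" "t i < s" "s \<in> ival I t i" for i s
    using trigger_positive[where g = "\<lambda>s. \<eta> s + \<theta> * (\<sigma> * \<alpha> (norm (x s)) - \<gamma> (norm (Lim (at_left s) e)))",
        OF _ that] trigger sampling_error_left_limit[OF x_cont e_def that] that(1)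
    by (simp add: w_def)
  have deriv: "(\<eta> has_real_derivative (- \<beta> (\<eta> s) + w s)) (at s)"
    if "i \<in> I" "t i < s" "s \<in> ival I t i" for i s
  proof -
    have "(\<eta> has_real_derivative (- \<beta> (\<eta> s) + \<sigma> * \<alpha> (norm (x s)) - \<gamma> (norm (e s)))) (at s)"
      using \<eta>_ode[rule_format, OF that(1,3)] at_within_interior[OF interior_ival[OF that(2,3)]]
      by simp
    then show ?thesis
      by (simp add: w_def algebra_simps)
  qed
  have "w (t i) \<ge> 0" if "i \<in> I" for i
    using e_def t_in_ival[OF that] that K(3,4) \<sigma> by (simp add: w_def Kinf_def)
  moreover have "\<beta> 0 = 0"
    using \<beta>(2) by (simp add: Kinf_def)
  ultimately show ?thesis
    using triggering_quantity_nonneg[OF \<eta>_cont \<eta>0 smooth_fn_real_differentiable[OF \<beta>(1)] _ \<theta>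
        deriv pos] by (simp add: w_def)
qed

end
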